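(* Let $w_0,w_1$ be finite words in the alphabet $\{0,1\}$ which both start with $10$. Then $R(w_0\cdot w_1)=R(w_0)\cdot R(w_1)$, where $\cdot$ denotes concatenation.
   Context: For $k\ge1$ set $\sigma(0^k)=0^k$, $\sigma(1^{2k})=(12)^k$, $\sigma(1^{2k-1})=2(12)^{k-1}$. Let $\Sigma_1\subseteq\{0,1\}^{\mathbb{N}}$ be the set of sequences that are eventually constantly $1$. The recoding map $R:\{0,1\}^{\mathbb{N}}\setminus\Sigma_1\to\{0,1,2\}^{\mathbb{N}}$ is defined by writing $\mathbf{a}=1^{a_0}0^{a_1}1^{a_2}0^{a_3}\cdots$ with $a_0\ge0$ and $a_i\ge1$ for $i\ge1$ (maximal blocks) and setting $R(\mathbf{a})=\sigma(1^{a_0})\sigma(0^{a_1})\sigma(1^{a_2})\sigma(0^{a_3})\cdots$ (with $\sigma(1^0)$ the empty word). For a finite word $w=a_1\cdots a_m\in\{0,1\}^m$ with $w\ne1^m$, write $R(w^\infty)=b_1b_2\cdots$ and define $R(w):=b_1\cdots b_m$. *)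

theory Defs
  imports Main
begin

text \<open>The recoding map is defined block by block:
  a position n carrying a 0 lies in a block of 0s and is mapped to 0 (sigma(0^k)=0^k);
  a position carrying a 1 lies in a maximal block 1^L, at offset j (0-based),
  and is mapped to the j-th letter of sigma(1^L).\<close>

definition sigma_one :: "nat \<Rightarrow> nat list" where
  "sigma_one L = (if even L then concat (replicate (L div 2) [1, 2])
                  else 2 # concat (replicate ((L - 1) div 2) [1, 2]))"

definition ones_before :: "(nat \<Rightarrow> nat) \<Rightarrow> nat \<Rightarrow> nat" where
  "ones_before a n = (LEAST k. k = n \<or> a (n - Suc k) \<noteq> 1)"

text \<open>number of consecutive 1s starting at position n (finite if a is not eventually 1)\<close>
definition ones_from :: "(nat \<Rightarrow> nat) \<Rightarrow> nat \<Rightarrow> nat" where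
  "ones_from a n = (LEAST k. a (n + k) \<noteq> 1)"

definition Rseq :: "(nat \<Rightarrow> nat) \<Rightarrow> (nat \<Rightarrow> nat)" where
  "Rseq a n = (if a n = 0 then 0
               else sigma_one (ones_before a n + ones_from a n) ! ones_before a n)"

definition per :: "nat list \<Rightarrow> (nat \<Rightarrow> nat)" where
  "per w = (\<lambda>n. w ! (n mod length w))"

definition Rword :: "nat list \<Rightarrow> nat list" where
  "Rword w = map (Rseq (per w)) [0..<length w]"

end

theory Submission
  imports Defs "HOL-Library.Sublist"
begin

text \<open>The recoding is local: the letter written at position n depends only on the letter
  there and on the maximal block of 1s around it. In (w0 w1)^\<infinity> the word w0 is followed
  by 10, exactly as in w0^\<infinity>, so the first |w0| positions see the same blocks. The 0 at
  position |w0|+1 cuts every block off from w0, so positions |w0|+2, ... see the same blocks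
  as positions 2, ... of w1^\<infinity> (again followed by 10). The remaining position |w0| ends a
  block of 1s in both sequences, and the last letter of every sigma(1^L) is 2.\<close>

lemma Least_cong_bounded:
  fixes P Q :: "nat \<Rightarrow> bool"
  assumes "P K" and "\<And>k. k \<le> K \<Longrightarrow> P k \<longleftrightarrow> Q k"
  shows "Least P = Least Q"
proof -
  have "Q K" using assms by auto
  have "P (Least P)" "Least P \<le> K" using \<open>P K\<close> by (rule LeastI, rule Least_le)
  moreover have "Q (Least Q)" "Least Q \<le> K" using \<open>Q K\<close> by (rule LeastI, rule Least_le)
  ultimately have "Q (Least P)" "P (Least Q)" using assms(2) by blast+
  then show ?thesis by (simp add: Least_le le_antisym)
qed

lemma ones_from_cong:
  assumes "a (n + e) \<noteq> 1" and "\<forall>k\<le>e. a (n + k) = b (m + k)"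
  shows "ones_from a n = ones_from b m"
  unfolding ones_from_def
  by (rule Least_cong_bounded[where K = e]) (use assms in auto)

lemma ones_before_cong:
  assumes "l = 0 \<or> a (l - 1) \<noteq> 1" and "l' = 0 \<or> b (l' - 1) \<noteq> 1"
    and "\<forall>j<d. a (l + j) = b (l' + j)"
  shows "ones_before a (l + d) = ones_before b (l' + d)"
  unfolding ones_before_def
proof (rule Least_cong_bounded[where K = d])
  fix k assume "k \<le> d"
  show "(k = l + d \<or> a (l + d - Suc k) \<noteq> 1) \<longleftrightarrow> (k = l' + d \<or> b (l' + d - Suc k) \<noteq> 1)"
  proof (cases "k = d")
    case True
    then show ?thesis using assms(1,2) by auto
  next
    case False
    then have "l + d - Suc k = l + (d - Suc k)" "l' + d - Suc k = l' + (d - Suc k)"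
      and "d - Suc k < d" using \<open>k \<le> d\<close> by auto
    then have "a (l + d - Suc k) = b (l' + d - Suc k)"
      using assms(3) by presburger
    then show ?thesis using \<open>k \<le> d\<close> False by auto
  qed
qed (use assms(1) in auto)

text \<open>The window starts at l (resp. l') right after a letter other than 1, or at the very
  beginning, so no block of 1s reaches into it from the left; it ends at a letter other than 1.\<close>

lemma Rseq_cong_window:
  assumes "l = 0 \<or> a (l - 1) \<noteq> 1" and "l' = 0 \<or> b (l' - 1) \<noteq> 1"
    and "a (l + d + e) \<noteq> 1" and "\<forall>j\<le>d + e. a (l + j) = b (l' + j)"
  shows "Rseq a (l + d) = Rseq b (l' + d)"
proof -
  have "ones_before a (l + d) = ones_before b (l' + d)"
    using assms(1,2,4) by (intro ones_before_cong) auto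
  moreover have "ones_from a (l + d) = ones_from b (l' + d)"
    using assms(3,4) by (intro ones_from_cong[where e = e]) (auto simp: add.assoc)
  moreover have "a (l + d) = b (l' + d)"
    using assms(4) by simp
  ultimately show ?thesis
    unfolding Rseq_def by simp
qed

lemma nth_concat_replicate_12:
  "i < 2 * k \<Longrightarrow> concat (replicate k [1::nat, 2]) ! i = (if even i then 1 else 2)"
proof (induction k arbitrary: i)
  case (Suc k)
  then show ?case
    by (auto simp: nth_Cons split: nat.split)
qed simp

lemma sigma_one_last: "sigma_one (Suc t) ! t = 2"
proof (cases "even t")
  case True
  show ?thesis
  proof (cases t)
    case (Suc s)
    then have "s < 2 * (t div 2)" "odd s" using True by presburger+
    then show ?thesis
      using Suc True nth_concat_replicate_12[of s "t div 2"] by (simp add: sigma_one_def)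
  qed (simp add: sigma_one_def)
next
  case False
  then have "t < 2 * (Suc t div 2)" by presburger
  then show ?thesis
    using False nth_concat_replicate_12[of t "Suc t div 2"] by (simp add: sigma_one_def)
qed

lemma Rseq_last_one:
  assumes "a n = 1" and "a (Suc n) \<noteq> 1"
  shows "Rseq a n = 2"
proof -
  have "ones_from a n = 1"
    unfolding ones_from_def using assms by (intro Least_equality) (auto simp: Suc_le_eq intro: gr0I)
  then show ?thesis
    using assms(1) sigma_one_last unfolding Rseq_def by simp
qed

lemma per_nth_prefix:
  assumes "prefix x (w @ w)" and "j < length x"
  shows "per w j = x ! j"
proof -
  obtain z where wwz: "w @ w = x @ z" using assms(1) by (auto elim: prefixE)
  then have "j < 2 * length w" using assms(2) by (metis length_append mult_2 trans_less_add1)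
  then have "per w j = (w @ w) ! j"
    unfolding per_def by (cases "j < length w") (auto simp: nth_append le_mod_geq)
  then show ?thesis using wwz assms(2) by (simp add: nth_append)
qed

lemma per_append_eq_nth_left:
  assumes "prefix [1, 0] v" and "j < length u + 2"
  shows "per (u @ v) j = (u @ [1, 0]) ! j"
  by (rule per_nth_prefix) (use assms in auto)

lemma per_append_eq_nth_right:
  assumes "prefix [1, 0] u" and "j < length v + 2"
  shows "per (u @ v) (length u + j) = (v @ [1, 0]) ! j"
proof -
  have "prefix (u @ v @ [1, 0]) ((u @ v) @ (u @ v))"
    using assms(1) by simp
  then show ?thesis
    using per_nth_prefix[of "u @ v @ [1, 0]" "u @ v" "length u + j"] assms(2) by simp
qed

lemma per_eq_nth_snoc:
  assumes "prefix [1, 0] w" and "j < length w + 2"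
  shows "per w j = (w @ [1, 0]) ! j"
  by (rule per_nth_prefix) (use assms in auto)

lemma Rseq_per_append_left:
  assumes u: "prefix [1, 0] u" and v: "prefix [1, 0] v" and "n < length u"
  shows "Rseq (per (u @ v)) n = Rseq (per u) n"
proof -
  let ?e = "length u + 1 - n"
  have "per (u @ v) j = per u j" if "j \<le> n + ?e" for j
    using per_append_eq_nth_left[OF v] per_eq_nth_snoc[OF u] that \<open>n < length u\<close> by simp
  moreover have "per (u @ v) (n + ?e) = 0"
    using per_append_eq_nth_left[OF v, of "length u + 1"] \<open>n < length u\<close> by (simp add: nth_append)
  ultimately show ?thesis
    using Rseq_cong_window[of 0 "per (u @ v)" 0 "per u" n ?e] by simp
qed

lemma Rseq_per_append_right:
  assumes u: "prefix [1, 0] u" and v: "prefix [1, 0] v" and "i < length v"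
  shows "Rseq (per (u @ v)) (length u + i) = Rseq (per v) i"
proof -
  let ?a = "per (u @ v)" and ?b = "per v"
  have ab: "?a (length u + j) = (v @ [1, 0]) ! j" "?b j = (v @ [1, 0]) ! j"
    if "j < length v + 2" for j
    using per_append_eq_nth_right[OF u that] per_eq_nth_snoc[OF v that] by auto
  obtain r where r: "v = 1 # 0 # r"
    using v by (auto elim: prefixE)
  have sep: "?a (length u + 1) = 0" "?b 1 = 0"
    using ab[of 1] r by simp_all
  consider "i = 0" | "i = 1" | "2 \<le> i"
    by linarith
  then show ?thesis
  proof cases
    case 1
    have "Rseq ?a (length u) = 2"
      by (rule Rseq_last_one) (use ab[of 0] sep r in simp_all)
    moreover have "Rseq ?b 0 = 2"
      by (rule Rseq_last_one) (use ab[of 0] sep r in simp_all)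
    ultimately show ?thesis
      using 1 by simp
  next
    case 2
    then show ?thesis
      using sep by (simp add: Rseq_def)
  next
    case 3
    define d where "d = i - 2"
    define e where "e = length v + 1 - i"
    have "?a (length u + 2 + j) = ?b (2 + j)" if "j \<le> d + e" for j
    proof -
      have "2 + j < length v + 2"
        using that \<open>i < length v\<close> 3 unfolding d_def e_def by linarith
      then show ?thesis
        using ab[of "2 + j"] by (simp add: add.assoc)
    qed
    moreover have "?a (length u + 2 + d + e) = 0"
    proof -
      have end_pos: "length u + 2 + d + e = length u + (length v + 1)"
        using \<open>i < length v\<close> 3 unfolding d_def e_def by linarith
      show ?thesis
        unfolding end_pos using ab(1)[of "length v + 1"] by (simp add: nth_append)
    qed
    ultimately have "Rseq ?a (length u + 2 + d) = Rseq ?b (2 + d)"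
      using Rseq_cong_window[of "length u + 2" ?a 2 ?b d e] sep by simp
    moreover have "2 + d = i"
      using 3 unfolding d_def by simp
    ultimately show ?thesis
      by (metis add.assoc)
  qed
qed

lemma map_upt_add:
  "map f [0..<m + n] = map f [0..<m] @ map (\<lambda>i. f (m + i)) [0..<n]"
  by (induction n) auto

theorem lemma8p7:
  fixes w0 w1 :: "nat list"
  assumes "set w0 \<subseteq> {0, 1}" and "set w1 \<subseteq> {0, 1}"
    and "take 2 w0 = [1, 0]" and "take 2 w1 = [1, 0]"
  shows "Rword (w0 @ w1) = Rword w0 @ Rword w1"
proof -
  have u: "prefix [1, 0] w0" and v: "prefix [1, 0] w1"
    using assms(3,4) take_is_prefix by metis+
  have "Rword (w0 @ w1) = map (Rseq (per (w0 @ w1))) [0..<length w0]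
      @ map (\<lambda>i. Rseq (per (w0 @ w1)) (length w0 + i)) [0..<length w1]"
    unfolding Rword_def by (simp add: map_upt_add)
  also have "\<dots> = Rword w0 @ Rword w1"
    unfolding Rword_def
    using Rseq_per_append_left[OF u v] Rseq_per_append_right[OF u v] by simp
  finally show ?thesis .
qed

end
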